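(* Let $G$ be a finite simple graph on vertex set $[n]$, $S=\mathbb{K}[x_1,\dots,x_n]$, $\mathcal{T}$ the set of triangles of $G$ (3-element vertex sets inducing $K_3$), and $M=\mathcal{F}(G)^{(2)}/\mathcal{F}(G)^2$ as a graded $\mathbb{K}$-vector space. Then for every integer $z$, $$H_M(z)=\sum_{T\in\mathcal{T}}H_{S_T/I_T}(z-3),$$ where $S_T=\mathbb{K}[x_v: v\in [n]\setminus N[T]]$, $I_T=\mathcal{F}(G-N[T])\subset S_T$, and $H_N(i)=\dim_{\mathbb{K}}N_i$ denotes the Hilbert function.
   Context: $\mathcal{F}(G)=(x_ix_j:\{i,j\}\in E(G))$. For squarefree monomial $I$, $I^{(2)}=\bigcap_{P\in\mathrm{Ass}(I)}P^2$. For $v$ a vertex, $N[v]=\{v\}\cup\{u:\{u,v\}\in E(G)\}$ is the closed neighborhood, and $N[A]=\bigcup_{v\in A}N[v]$. $G-N[T]$ denotes the induced subgraph of $G$ on the vertex set $[n]\setminus N[T]$. (If $[n]\setminus N[T]=\emptyset$ then $S_T=\mathbb{K}$ and $I_T=0$.) *)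

theory Defs
  imports Main "HOL.Vector_Spaces" "HOL-Library.Poly_Mapping"
begin

text \<open>Polynomials in variables x_i (i :: nat) over a field 'k:
  finitely supported maps from monomials (exponent vectors nat =>0 nat) to coefficients.\<close>
type_synonym 'k mpoly = "(nat \<Rightarrow>\<^sub>0 nat) \<Rightarrow>\<^sub>0 'k"

text \<open>The polynomial ring K[x_v : v in A], as a subset of all polynomials.\<close>
definition polyring :: "nat set \<Rightarrow> ('k::field) mpoly set" where
  "polyring A = {p. \<forall>m \<in> Poly_Mapping.keys (p::'k mpoly). Poly_Mapping.keys m \<subseteq> A}"

inductive_set ideal_gen :: "nat set \<Rightarrow> ('k::field) mpoly set \<Rightarrow> 'k mpoly set"
  for A X where
  gen: "x \<in> X \<Longrightarrow> x \<in> ideal_gen A X"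
| zero: "0 \<in> ideal_gen A X"
| add: "p \<in> ideal_gen A X \<Longrightarrow> q \<in> ideal_gen A X \<Longrightarrow> p + q \<in> ideal_gen A X"
| mult: "r \<in> polyring A \<Longrightarrow> p \<in> ideal_gen A X \<Longrightarrow> r * p \<in> ideal_gen A X"

definition is_ideal :: "nat set \<Rightarrow> ('k::field) mpoly set \<Rightarrow> bool" where
  "is_ideal A P \<longleftrightarrow> P \<subseteq> polyring A \<and> 0 \<in> P \<and> (\<forall>p\<in>P. \<forall>q\<in>P. p + q \<in> P)
     \<and> (\<forall>r\<in>polyring A. \<forall>p\<in>P. r * p \<in> P)"

definition is_prime_ideal :: "nat set \<Rightarrow> ('k::field) mpoly set \<Rightarrow> bool" where
  "is_prime_ideal A P \<longleftrightarrow> is_ideal A P \<and> P \<noteq> polyring A \<and>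
     (\<forall>a\<in>polyring A. \<forall>b\<in>polyring A. a * b \<in> P \<longrightarrow> a \<in> P \<or> b \<in> P)"

definition Ass :: "nat set \<Rightarrow> ('k::field) mpoly set \<Rightarrow> 'k mpoly set set" where
  "Ass A I = {P. is_prime_ideal A P \<and> (\<exists>f\<in>polyring A. P = {g\<in>polyring A. g * f \<in> I})}"

definition ideal_prod :: "nat set \<Rightarrow> ('k::field) mpoly set \<Rightarrow> 'k mpoly set \<Rightarrow> 'k mpoly set" where
  "ideal_prod A I J = ideal_gen A {f * g |f g. f \<in> I \<and> g \<in> J}"

text \<open>Second symbolic power, as defined for squarefree monomial ideals:
  intersection of the squares of the associated primes.\<close>
definition symb_sq :: "nat set \<Rightarrow> ('k::field) mpoly set \<Rightarrow> 'k mpoly set" where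
  "symb_sq A I = polyring A \<inter> \<Inter>{ideal_prod A P P |P. P \<in> Ass A I}"

definition xx :: "nat \<Rightarrow> nat \<Rightarrow> ('k::field) mpoly" where
  "xx i j = Poly_Mapping.single (Poly_Mapping.single i 1 + Poly_Mapping.single j 1) 1"

text \<open>Edge ideal F(G[A]) in polyring A, for a graph with edge set E (set of 2-sets).\<close>
definition edge_ideal :: "nat set \<Rightarrow> nat set set \<Rightarrow> ('k::field) mpoly set" where
  "edge_ideal A E = ideal_gen A {xx i j |i j. {i, j} \<in> E \<and> i \<in> A \<and> j \<in> A}"

definition mdeg :: "(nat \<Rightarrow>\<^sub>0 nat) \<Rightarrow> nat" where
  "mdeg m = (\<Sum>i\<in>Poly_Mapping.keys m. Poly_Mapping.lookup m i)"

definition homog :: "nat \<Rightarrow> ('k::field) mpoly set" where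
  "homog d = {p. \<forall>m\<in>Poly_Mapping.keys (p::'k mpoly). mdeg m = d}"

definition kscale :: "'k::field \<Rightarrow> 'k mpoly \<Rightarrow> 'k mpoly" where
  "kscale c p = Poly_Mapping.map (\<lambda>a. c * a) p"

text \<open>Hilbert function of the graded quotient J/I (I \<subseteq> J homogeneous ideals of polyring A):
  H(z) = dim_K J_z - dim_K I_z = dim_K (J/I)_z, and 0 for negative z.\<close>
definition hilb :: "nat set \<Rightarrow> ('k::field) mpoly set \<Rightarrow> 'k mpoly set \<Rightarrow> int \<Rightarrow> nat" where
  "hilb A J I z = (if z < 0 then 0 else
     vector_space.dim kscale (J \<inter> polyring A \<inter> homog (nat z))
     - vector_space.dim kscale (I \<inter> polyring A \<inter> homog (nat z)))"

definition closed_nbhd :: "nat set set \<Rightarrow> nat set \<Rightarrow> nat set" where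
  "closed_nbhd E T = T \<union> {u. \<exists>v\<in>T. {u, v} \<in> E}"

definition triangles :: "nat \<Rightarrow> nat set set \<Rightarrow> nat set set" where
  "triangles n E = {T. T \<subseteq> {1..n} \<and> card T = 3 \<and> (\<forall>u\<in>T. \<forall>v\<in>T. u \<noteq> v \<longrightarrow> {u, v} \<in> E)}"

end

theory Submission
  imports Defs
begin

text \<open>
  The associated primes of the edge ideal \<open>F(G)\<close> are the ideals \<open>P\<^sub>C\<close> generated by the
  variables of the minimal vertex covers \<open>C\<close> of \<open>G\<close> (\<open>P\<^sub>C\<close> is the colon of \<open>F(G)\<close> by the
  product of the variables outside \<open>C\<close>). Hence \<open>F(G)\<^sup>(\<^sup>2\<^sup>)\<close> and \<open>F(G)\<^sup>2\<close> are both monomial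
  ideals: the first is spanned by the monomials of degree at least 2 on every vertex cover, the
  second by the monomials divisible by a product of two edges, and \<open>H\<^sub>M(z)\<close> counts the monomials
  of degree \<open>z\<close> of the first kind but not of the second.

  Such a monomial is not divisible by two disjoint edges, nor by \<open>x\<^sub>a x\<^sub>b\<^sup>2 x\<^sub>c\<close> along a path
  \<open>a - b - c\<close>. If its support contained no triangle, all edges inside the support would pass
  through one vertex \<open>c\<close> of exponent one, and \<open>c\<close> together with the vertices outside the support
  would form a vertex cover on which the monomial has degree at most 1. So the support contains a
  triangle \<open>T\<close>, whose vertices have exponent one, while the rest of the support avoids \<open>N[T]\<close> and
  contains no edge. Thus the monomial is \<open>x\<^sub>T u\<close> for a unique triangle \<open>T\<close> and a standard monomial
  \<open>u\<close> of \<open>S\<^sub>T/I\<^sub>T\<close> of degree \<open>z - 3\<close>, and conversely every such product qualifies.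
\<close>

section \<open>Monomial ideals\<close>

lemma kscale_eq_mult_const: "kscale c p = Poly_Mapping.single 0 c * p"
  unfolding kscale_def by (rule mult_map_scale_conv_mult)

interpretation kv: vector_space "kscale :: 'k::field \<Rightarrow> 'k mpoly \<Rightarrow> 'k mpoly"
proof
  fix a b :: 'k and x y :: "'k mpoly"
  show "kscale a (x + y) = kscale a x + kscale a y"
    by (simp add: kscale_eq_mult_const distrib_left)
  show "kscale (a + b) x = kscale a x + kscale b x"
    by (simp add: kscale_eq_mult_const single_add distrib_right)
  show "kscale a (kscale b x) = kscale (a * b) x"
    by (simp add: kscale_eq_mult_const mult.assoc[symmetric] mult_single)
  show "kscale 1 x = x"
    by (simp add: kscale_eq_mult_const)
qed

abbreviation mon :: "(nat \<Rightarrow>\<^sub>0 nat) \<Rightarrow> 'k::field mpoly" where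
  "mon m \<equiv> Poly_Mapping.single m 1"

lemma kscale_mon: "kscale c (mon m :: 'k::field mpoly) = Poly_Mapping.single m c"
  by (simp add: kscale_eq_mult_const mult_single)

lemma keys_add_nat:
  "Poly_Mapping.keys ((a::nat \<Rightarrow>\<^sub>0 nat) + b) = Poly_Mapping.keys a \<union> Poly_Mapping.keys b"
  by (auto simp: in_keys_iff lookup_add)

lemma poly_mapping_sum_single:
  "p = (\<Sum>m\<in>Poly_Mapping.keys p. Poly_Mapping.single m (Poly_Mapping.lookup p m))"
  by (rule poly_mapping_eqI) (simp add: lookup_sum lookup_single when_def in_keys_iff)

lemma in_keys_multE:
  assumes "m \<in> Poly_Mapping.keys (f * g)"
  obtains a b where "m = a + b" "a \<in> Poly_Mapping.keys f" "b \<in> Poly_Mapping.keys g"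
  using assms keys_mult[of f g] by blast

lemma lookup_mult_mon:
  "Poly_Mapping.lookup ((p::'k::field mpoly) * mon u) (m + u) = Poly_Mapping.lookup p m"
proof -
  have "p * mon u = (\<Sum>m\<in>Poly_Mapping.keys p. Poly_Mapping.single (m + u) (Poly_Mapping.lookup p m))"
    by (subst poly_mapping_sum_single[of p]) (simp add: sum_distrib_right mult_single)
  then show ?thesis
    by (simp add: lookup_sum lookup_single when_def in_keys_iff)
qed

lemma keys_mult_mon:
  "Poly_Mapping.keys ((p::'k::field mpoly) * mon u) = (\<lambda>m. m + u) ` Poly_Mapping.keys p"
proof
  show "Poly_Mapping.keys (p * mon u) \<subseteq> (\<lambda>m. m + u) ` Poly_Mapping.keys p"
    by (auto elim: in_keys_multE)
  show "(\<lambda>m. m + u) ` Poly_Mapping.keys p \<subseteq> Poly_Mapping.keys (p * mon u)"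
    by (auto simp: in_keys_iff lookup_mult_mon)
qed

lemma polyring_add: "p \<in> polyring A \<Longrightarrow> q \<in> polyring A \<Longrightarrow> p + q \<in> polyring A"
  using keys_add[of p q] by (auto simp: polyring_def)

lemma polyring_diff: "p \<in> polyring A \<Longrightarrow> q \<in> polyring A \<Longrightarrow> p - q \<in> polyring A"
  using keys_diff[of p q] by (auto simp: polyring_def)

lemma polyring_mult:
  assumes "p \<in> polyring A" "q \<in> polyring A"
  shows "p * q \<in> polyring A"
  unfolding polyring_def
proof (intro CollectI ballI)
  fix m assume "m \<in> Poly_Mapping.keys (p * q)"
  then obtain a b where "m = a + b" "a \<in> Poly_Mapping.keys p" "b \<in> Poly_Mapping.keys q"
    by (rule in_keys_multE)
  then show "Poly_Mapping.keys m \<subseteq> A"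
    using assms by (auto simp: polyring_def keys_add_nat)
qed

lemma polyring_single: "Poly_Mapping.keys m \<subseteq> A \<Longrightarrow> Poly_Mapping.single m c \<in> polyring A"
  unfolding polyring_def by simp

lemma ideal_gen_subset: "X \<subseteq> P \<Longrightarrow> is_ideal A P \<Longrightarrow> ideal_gen A X \<subseteq> P"
proof
  fix x assume "x \<in> ideal_gen A X" "X \<subseteq> P" "is_ideal A P"
  then show "x \<in> P"
    by induction (auto simp: is_ideal_def)
qed

lemma ideal_gen_mono: "X \<subseteq> Y \<Longrightarrow> ideal_gen A X \<subseteq> ideal_gen A Y"
proof
  fix x assume "x \<in> ideal_gen A X" "X \<subseteq> Y"
  then show "x \<in> ideal_gen A Y"
    by induction (auto intro: ideal_gen.intros)
qed

lemma ideal_gen_sum: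
  "finite S \<Longrightarrow> (\<And>x. x \<in> S \<Longrightarrow> f x \<in> ideal_gen A X) \<Longrightarrow> sum f S \<in> ideal_gen A X"
  by (induction S rule: finite_induct) (auto intro: ideal_gen.intros)

definition adds :: "(nat \<Rightarrow>\<^sub>0 nat) \<Rightarrow> (nat \<Rightarrow>\<^sub>0 nat) \<Rightarrow> bool" (infix "adds" 50) where
  "g adds m \<longleftrightarrow> (\<forall>v. Poly_Mapping.lookup g v \<le> Poly_Mapping.lookup m v)"

lemma adds_add_right: "g adds m \<Longrightarrow> g adds m + k"
  by (auto simp: adds_def lookup_add intro: le_add1 order_trans)

lemma add_adds_add: "g1 adds m1 \<Longrightarrow> g2 adds m2 \<Longrightarrow> g1 + g2 adds m1 + m2"
  by (auto simp: adds_def lookup_add intro: add_mono)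

lemma adds_diff_add: "g adds m \<Longrightarrow> m = (m - g) + g"
  by (rule poly_mapping_eqI) (auto simp: adds_def lookup_add lookup_minus)

definition multiple_of :: "(nat \<Rightarrow>\<^sub>0 nat) set \<Rightarrow> (nat \<Rightarrow>\<^sub>0 nat) \<Rightarrow> bool" where
  "multiple_of G m \<longleftrightarrow> (\<exists>g\<in>G. g adds m)"

definition monomial_ideal :: "nat set \<Rightarrow> ((nat \<Rightarrow>\<^sub>0 nat) \<Rightarrow> bool) \<Rightarrow> 'k::field mpoly set" where
  "monomial_ideal A Q = {p \<in> polyring A. \<forall>m\<in>Poly_Mapping.keys p. Q m}"

lemma polyring_eq_monomial_ideal: "polyring A = monomial_ideal A (\<lambda>_. True)"
  by (simp add: monomial_ideal_def)

lemma monomial_ideal_diff: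
  "p \<in> monomial_ideal A Q \<Longrightarrow> q \<in> monomial_ideal A Q \<Longrightarrow> p - q \<in> monomial_ideal A Q"
  using keys_diff[of p q] by (auto simp: monomial_ideal_def intro!: polyring_diff)

lemma is_ideal_monomial_ideal:
  assumes up: "\<And>m k. Q m \<Longrightarrow> Q (m + k)"
  shows "is_ideal A (monomial_ideal A Q :: 'k::field mpoly set)"
  unfolding is_ideal_def
proof (intro conjI ballI)
  show "monomial_ideal A Q \<subseteq> polyring A" "0 \<in> (monomial_ideal A Q :: 'k mpoly set)"
    by (auto simp: monomial_ideal_def polyring_def)
  fix p q :: "'k mpoly" assume "p \<in> monomial_ideal A Q" "q \<in> monomial_ideal A Q"
  then show "p + q \<in> monomial_ideal A Q"
    using keys_add[of p q] by (auto simp: monomial_ideal_def intro!: polyring_add)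
next
  fix r p :: "'k mpoly" assume r: "r \<in> polyring A" and p: "p \<in> monomial_ideal A Q"
  have "Q m" if "m \<in> Poly_Mapping.keys (r * p)" for m
  proof -
    obtain a b where "m = a + b" "a \<in> Poly_Mapping.keys r" "b \<in> Poly_Mapping.keys p"
      using \<open>m \<in> Poly_Mapping.keys (r * p)\<close> by (rule in_keys_multE)
    then show "Q m" using p up[of b a] by (auto simp: monomial_ideal_def add.commute)
  qed
  then show "r * p \<in> monomial_ideal A Q"
    using r p polyring_mult by (auto simp: monomial_ideal_def)
qed

lemma is_ideal_monomial_ideal_multiple_of:
  "is_ideal A (monomial_ideal A (multiple_of G) :: 'k::field mpoly set)"
  by (rule is_ideal_monomial_ideal) (auto simp: multiple_of_def intro: adds_add_right)

lemma mon_in_monomial_ideal_multiple_of: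
  "g \<in> G \<Longrightarrow> Poly_Mapping.keys g \<subseteq> A \<Longrightarrow> (mon g :: 'k::field mpoly) \<in> monomial_ideal A (multiple_of G)"
  by (auto simp: monomial_ideal_def multiple_of_def polyring_def adds_def)

lemma monomial_ideal_subset_ideal_gen:
  assumes "\<And>m. Poly_Mapping.keys m \<subseteq> A \<Longrightarrow> Q m \<Longrightarrow> (mon m :: 'k::field mpoly) \<in> ideal_gen A X"
  shows "(monomial_ideal A Q :: 'k mpoly set) \<subseteq> ideal_gen A X"
proof
  fix p :: "'k mpoly" assume p: "p \<in> monomial_ideal A Q"
  have "Poly_Mapping.single m (Poly_Mapping.lookup p m) \<in> ideal_gen A X"
    if m: "m \<in> Poly_Mapping.keys p" for m
  proof -
    have "Poly_Mapping.single m (Poly_Mapping.lookup p m) =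
        Poly_Mapping.single 0 (Poly_Mapping.lookup p m) * (mon m :: 'k mpoly)"
      by (simp add: mult_single)
    moreover have "(mon m :: 'k mpoly) \<in> ideal_gen A X"
      using assms m p by (auto simp: monomial_ideal_def polyring_def)
    ultimately show ?thesis
      by (simp add: ideal_gen.mult polyring_single)
  qed
  then show "p \<in> ideal_gen A X"
    by (subst poly_mapping_sum_single) (auto intro: ideal_gen_sum)
qed

lemma ideal_gen_monomials:
  assumes "\<And>g. g \<in> G \<Longrightarrow> Poly_Mapping.keys g \<subseteq> A"
  shows "ideal_gen A (mon ` G) = (monomial_ideal A (multiple_of G) :: 'k::field mpoly set)"
proof
  show "ideal_gen A (mon ` G) \<subseteq> (monomial_ideal A (multiple_of G) :: 'k mpoly set)"
  proof (rule ideal_gen_subset[OF image_subsetI is_ideal_monomial_ideal_multiple_of])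
    fix g assume "g \<in> G"
    then show "(mon g :: 'k mpoly) \<in> monomial_ideal A (multiple_of G)"
      using assms[OF \<open>g \<in> G\<close>] by (rule mon_in_monomial_ideal_multiple_of)
  qed
  show "(monomial_ideal A (multiple_of G) :: 'k mpoly set) \<subseteq> ideal_gen A (mon ` G)"
  proof (rule monomial_ideal_subset_ideal_gen)
    fix m assume m: "Poly_Mapping.keys m \<subseteq> A" "multiple_of G m"
    then obtain g where g: "g \<in> G" "g adds m" by (auto simp: multiple_of_def)
    have "(mon m :: 'k mpoly) = mon (m - g) * mon g"
      by (subst adds_diff_add[OF g(2)]) (simp add: mult_single)
    moreover have "(mon (m - g) :: 'k mpoly) \<in> polyring A"
      using m by (intro polyring_single) (auto simp: in_keys_iff lookup_minus)
    ultimately show "(mon m :: 'k mpoly) \<in> ideal_gen A (mon ` G)"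
      using g by (simp add: ideal_gen.mult ideal_gen.gen)
  qed
qed

lemma mult_in_monomial_ideal_multiple_of:
  assumes f: "f \<in> monomial_ideal A (multiple_of G1)" and g: "g \<in> monomial_ideal A (multiple_of G2)"
  shows "(f * g :: 'k::field mpoly) \<in>
    monomial_ideal A (multiple_of {g1 + g2 |g1 g2. g1 \<in> G1 \<and> g2 \<in> G2})"
proof -
  have "multiple_of {g1 + g2 |g1 g2. g1 \<in> G1 \<and> g2 \<in> G2} m"
    if "m \<in> Poly_Mapping.keys (f * g)" for m
  proof -
    obtain a b where ab: "m = a + b" "a \<in> Poly_Mapping.keys f" "b \<in> Poly_Mapping.keys g"
      using \<open>m \<in> Poly_Mapping.keys (f * g)\<close> by (rule in_keys_multE)
    obtain g1 where "g1 \<in> G1" "g1 adds a"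
      using f ab by (auto simp: monomial_ideal_def multiple_of_def)
    moreover obtain g2 where "g2 \<in> G2" "g2 adds b"
      using g ab by (auto simp: monomial_ideal_def multiple_of_def)
    ultimately show ?thesis
      unfolding multiple_of_def ab(1) by (blast intro: add_adds_add)
  qed
  then show ?thesis
    using f g polyring_mult by (auto simp: monomial_ideal_def)
qed

lemma ideal_prod_monomial_ideals:
  assumes "\<And>g. g \<in> G1 \<Longrightarrow> Poly_Mapping.keys g \<subseteq> A" "\<And>g. g \<in> G2 \<Longrightarrow> Poly_Mapping.keys g \<subseteq> A"
  defines "G \<equiv> {g1 + g2 |g1 g2. g1 \<in> G1 \<and> g2 \<in> G2}"
  shows "ideal_prod A (monomial_ideal A (multiple_of G1)) (monomial_ideal A (multiple_of G2))
    = (monomial_ideal A (multiple_of G) :: 'k::field mpoly set)"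
proof
  show "ideal_prod A (monomial_ideal A (multiple_of G1)) (monomial_ideal A (multiple_of G2))
      \<subseteq> (monomial_ideal A (multiple_of G) :: 'k mpoly set)"
    unfolding ideal_prod_def
  proof (rule ideal_gen_subset[OF subsetI is_ideal_monomial_ideal_multiple_of])
    fix x assume "x \<in> {f * g |f g. f \<in> monomial_ideal A (multiple_of G1) \<and>
        g \<in> (monomial_ideal A (multiple_of G2) :: 'k mpoly set)}"
    then obtain f g where "x = f * g" "f \<in> monomial_ideal A (multiple_of G1)"
      "g \<in> monomial_ideal A (multiple_of G2)"
      by blast
    then show "x \<in> monomial_ideal A (multiple_of G)"
      unfolding G_def by (simp add: mult_in_monomial_ideal_multiple_of)
  qed
  have "(monomial_ideal A (multiple_of G) :: 'k mpoly set) = ideal_gen A (mon ` G)"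
    by (intro ideal_gen_monomials[symmetric]) (auto simp: G_def keys_add_nat dest!: assms(1,2))
  also have "\<dots> \<subseteq> ideal_prod A (monomial_ideal A (multiple_of G1)) (monomial_ideal A (multiple_of G2))"
    unfolding ideal_prod_def
  proof (rule ideal_gen_mono, rule subsetI)
    fix x assume "x \<in> (mon ` G :: 'k mpoly set)"
    then obtain g1 g2 where g: "g1 \<in> G1" "g2 \<in> G2" and x: "x = mon g1 * mon g2"
      by (auto simp: G_def mult_single)
    moreover have "(mon g1 :: 'k mpoly) \<in> monomial_ideal A (multiple_of G1)"
      "(mon g2 :: 'k mpoly) \<in> monomial_ideal A (multiple_of G2)"
      using g assms(1,2) by (simp_all add: mon_in_monomial_ideal_multiple_of)
    ultimately show "x \<in>
        {f * g |f g. f \<in> monomial_ideal A (multiple_of G1) \<and> g \<in> monomial_ideal A (multiple_of G2)}"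
      by blast
  qed
  finally show "(monomial_ideal A (multiple_of G) :: 'k mpoly set)
      \<subseteq> ideal_prod A (monomial_ideal A (multiple_of G1)) (monomial_ideal A (multiple_of G2))" .
qed

section \<open>Hilbert functions of monomial quotients\<close>

lemma mdeg_eq_sum_superset:
  "finite K \<Longrightarrow> Poly_Mapping.keys m \<subseteq> K \<Longrightarrow> mdeg m = (\<Sum>i\<in>K. Poly_Mapping.lookup m i)"
  unfolding mdeg_def by (rule sum.mono_neutral_left) (auto simp: in_keys_iff)

lemma mdeg_add: "mdeg (a + b) = mdeg a + mdeg b"
proof -
  let ?K = "Poly_Mapping.keys a \<union> Poly_Mapping.keys b"
  have "mdeg (a + b) = (\<Sum>i\<in>?K. Poly_Mapping.lookup (a + b) i)"
    by (rule mdeg_eq_sum_superset) (simp_all add: keys_add_nat)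
  also have "\<dots> = (\<Sum>i\<in>?K. Poly_Mapping.lookup a i) + (\<Sum>i\<in>?K. Poly_Mapping.lookup b i)"
    by (simp add: lookup_add sum.distrib)
  also have "\<dots> = mdeg a + mdeg b"
    using mdeg_eq_sum_superset[of ?K a] mdeg_eq_sum_superset[of ?K b] by simp
  finally show ?thesis .
qed

lemma lookup_le_mdeg: "Poly_Mapping.lookup m x \<le> mdeg m"
proof (cases "x \<in> Poly_Mapping.keys m")
  case True
  then show ?thesis unfolding mdeg_def by (intro member_le_sum) auto
qed (simp add: in_keys_iff)

lemma finite_monomials_of_degree:
  assumes "finite A"
  shows "finite {m. Poly_Mapping.keys m \<subseteq> A \<and> mdeg m = d}"
proof -
  let ?S = "{m. Poly_Mapping.keys m \<subseteq> A \<and> mdeg m = d}"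
  let ?F = "{f. \<forall>x. (x \<in> A \<longrightarrow> f x \<in> {0..d}) \<and> (x \<notin> A \<longrightarrow> f x = (0::nat))}"
  have "Poly_Mapping.lookup m \<in> ?F" if "m \<in> ?S" for m
  proof -
    have "Poly_Mapping.lookup m x \<in> {0..d}" for x
      using that lookup_le_mdeg[of m x] by simp
    moreover have "x \<notin> A \<Longrightarrow> Poly_Mapping.lookup m x = 0" for x
      using that by (metis (mono_tags, lifting) in_keys_iff mem_Collect_eq subsetD)
    ultimately show ?thesis by blast
  qed
  then have "finite (Poly_Mapping.lookup ` ?S)"
    by (intro finite_subset[OF _ finite_set_of_finite_funs[of A "{0..d}" 0]]) (use assms in auto)
  moreover have "inj_on Poly_Mapping.lookup ?S"
    by (rule inj_onI, rule poly_mapping_eqI) simp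
  ultimately show ?thesis
    by (rule finite_imageD)
qed

lemma dim_monomial_ideal_homog:
  assumes "finite A"
  shows "kv.dim ((monomial_ideal A Q :: 'k::field mpoly set) \<inter> homog d) =
    card {m. Poly_Mapping.keys m \<subseteq> A \<and> mdeg m = d \<and> Q m}"
proof -
  let ?M = "{m. Poly_Mapping.keys m \<subseteq> A \<and> mdeg m = d \<and> Q m}"
  let ?V = "(monomial_ideal A Q :: 'k mpoly set) \<inter> homog d"
  let ?B = "(mon ` ?M :: 'k mpoly set)"
  have finite_M: "finite ?M"
    by (rule finite_subset[OF _ finite_monomials_of_degree[OF assms, of d]]) auto
  have inj: "inj_on (mon :: _ \<Rightarrow> 'k mpoly) ?M"
    by (rule inj_onI) (metis lookup_single_eq lookup_single_not_eq one_neq_zero)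
  have "?B \<subseteq> ?V"
    by (auto simp: monomial_ideal_def homog_def intro: polyring_single)
  moreover have "?V \<subseteq> kv.span ?B"
  proof
    fix p assume p: "p \<in> ?V"
    have "kscale (Poly_Mapping.lookup p m) (mon m :: 'k mpoly) \<in> kv.span ?B"
      if "m \<in> Poly_Mapping.keys p" for m
      using p that by (intro kv.span_scale kv.span_base) (auto simp: monomial_ideal_def homog_def polyring_def)
    then have "(\<Sum>m\<in>Poly_Mapping.keys p. kscale (Poly_Mapping.lookup p m) (mon m :: 'k mpoly)) \<in> kv.span ?B"
      by (intro kv.span_sum)
    then show "p \<in> kv.span ?B"
      by (subst poly_mapping_sum_single) (simp add: kscale_mon)
  qed
  moreover have "kv.independent ?B"
  proof (rule kv.independent_if_scalars_zero)
    show "finite ?B" using finite_M by simp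
    fix c v assume c: "(\<Sum>v\<in>?B. kscale (c v) v) = 0" and v: "v \<in> ?B"
    then obtain m where m: "m \<in> ?M" "v = mon m" by blast
    have "(\<Sum>m'\<in>?M. Poly_Mapping.single m' (c (mon m'))) = 0"
      using c by (simp add: sum.reindex[OF inj] kscale_mon)
    then have "Poly_Mapping.lookup (\<Sum>m'\<in>?M. Poly_Mapping.single m' (c (mon m'))) m = 0" by simp
    then show "c v = 0"
      using m finite_M by (simp add: lookup_sum lookup_single when_def)
  qed
  ultimately have "card ?B = kv.dim ?V" by (rule kv.basis_card_eq_dim)
  then show ?thesis by (simp add: card_image[OF inj])
qed

text \<open>The truncated subtraction in \<^const>\<open>hilb\<close> is harmless here since \<open>Q1\<close> implies \<open>Q2\<close>.\<close>
lemma hilb_monomial_ideal: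
  assumes "finite A" and "\<And>m. Q1 m \<Longrightarrow> Q2 m" and "0 \<le> z"
  shows "hilb A (monomial_ideal A Q2 :: 'k::field mpoly set) (monomial_ideal A Q1) z =
    card {m. Poly_Mapping.keys m \<subseteq> A \<and> mdeg m = nat z \<and> Q2 m \<and> \<not> Q1 m}"
proof -
  let ?M = "\<lambda>Q. {m. Poly_Mapping.keys m \<subseteq> A \<and> mdeg m = nat z \<and> Q m}"
  have "finite (?M Q2)"
    by (rule finite_subset[OF _ finite_monomials_of_degree[OF assms(1), of "nat z"]]) auto
  moreover have "?M Q1 \<subseteq> ?M Q2" using assms(2) by auto
  ultimately have "card (?M Q2) - card (?M Q1) = card (?M Q2 - ?M Q1)"
    by (simp add: card_Diff_subset finite_subset)
  moreover have "(monomial_ideal A Q :: 'k mpoly set) \<inter> polyring A = monomial_ideal A Q" for Q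
    by (auto simp: monomial_ideal_def)
  moreover have "?M Q2 - ?M Q1 = {m. Poly_Mapping.keys m \<subseteq> A \<and> mdeg m = nat z \<and> Q2 m \<and> \<not> Q1 m}"
    by auto
  ultimately show ?thesis
    using assms(3) by (simp only: hilb_def dim_monomial_ideal_homog[OF assms(1)]) simp
qed

section \<open>Associated primes of edge ideals\<close>

definition unit_exp :: "nat \<Rightarrow> (nat \<Rightarrow>\<^sub>0 nat)" where
  "unit_exp i = Poly_Mapping.single i 1"

lemma lookup_unit_exp: "Poly_Mapping.lookup (unit_exp i) v = (if i = v then 1 else 0)"
  by (simp add: unit_exp_def lookup_single when_def)

lemma keys_unit_exp [simp]: "Poly_Mapping.keys (unit_exp i) = {i}"
  by (simp add: unit_exp_def)

lemma unit_exp_adds_iff: "unit_exp i adds m \<longleftrightarrow> i \<in> Poly_Mapping.keys m"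
  by (auto simp: adds_def lookup_unit_exp in_keys_iff Suc_le_eq)

lemma unit_exp_add_unit_exp_adds_iff:
  "unit_exp i + unit_exp j adds m \<longleftrightarrow>
    (if i = j then 2 \<le> Poly_Mapping.lookup m i else i \<in> Poly_Mapping.keys m \<and> j \<in> Poly_Mapping.keys m)"
proof
  assume "unit_exp i + unit_exp j adds m"
  then have "Poly_Mapping.lookup (unit_exp i + unit_exp j) i \<le> Poly_Mapping.lookup m i"
    "Poly_Mapping.lookup (unit_exp i + unit_exp j) j \<le> Poly_Mapping.lookup m j"
    by (auto simp: adds_def)
  then show "if i = j then 2 \<le> Poly_Mapping.lookup m i
      else i \<in> Poly_Mapping.keys m \<and> j \<in> Poly_Mapping.keys m"
    by (auto simp: lookup_add lookup_unit_exp in_keys_iff split: if_splits)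
qed (auto simp: adds_def lookup_add lookup_unit_exp in_keys_iff Suc_le_eq split: if_splits)

definition indicator_exp :: "nat set \<Rightarrow> (nat \<Rightarrow>\<^sub>0 nat)" where
  "indicator_exp T = (\<Sum>i\<in>T. unit_exp i)"

lemma lookup_indicator_exp:
  "finite T \<Longrightarrow> Poly_Mapping.lookup (indicator_exp T) v = (if v \<in> T then 1 else 0)"
  by (simp add: indicator_exp_def lookup_sum lookup_unit_exp)

lemma keys_indicator_exp: "finite T \<Longrightarrow> Poly_Mapping.keys (indicator_exp T) = T"
  by (auto simp: in_keys_iff lookup_indicator_exp split: if_splits)

lemma mdeg_indicator_exp: "finite T \<Longrightarrow> mdeg (indicator_exp T) = card T"
  by (simp add: mdeg_def keys_indicator_exp lookup_indicator_exp)

definition edge_exps :: "nat set \<Rightarrow> nat set set \<Rightarrow> (nat \<Rightarrow>\<^sub>0 nat) set" where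
  "edge_exps A E = {unit_exp i + unit_exp j |i j. {i, j} \<in> E \<and> i \<in> A \<and> j \<in> A}"

lemma edge_ideal_eq_monomial_ideal:
  "edge_ideal A E = (monomial_ideal A (multiple_of (edge_exps A E)) :: 'k::field mpoly set)"
proof -
  have gens: "{xx i j |i j. {i, j} \<in> E \<and> i \<in> A \<and> j \<in> A} = (mon ` edge_exps A E :: 'k mpoly set)"
    by (auto simp: xx_def edge_exps_def unit_exp_def)
  have "\<And>g. g \<in> edge_exps A E \<Longrightarrow> Poly_Mapping.keys g \<subseteq> A"
    by (auto simp: edge_exps_def keys_add_nat)
  then show ?thesis
    unfolding edge_ideal_def gens by (rule ideal_gen_monomials)
qed

lemma is_ideal_edge_ideal: "is_ideal A (edge_ideal A E :: 'k::field mpoly set)"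
  by (simp add: edge_ideal_eq_monomial_ideal is_ideal_monomial_ideal_multiple_of)

definition vertex_cover :: "nat set \<Rightarrow> nat set set \<Rightarrow> nat set \<Rightarrow> bool" where
  "vertex_cover A E C \<longleftrightarrow> C \<subseteq> A \<and> (\<forall>e\<in>E. e \<inter> C \<noteq> {})"

definition min_vertex_cover :: "nat set \<Rightarrow> nat set set \<Rightarrow> nat set \<Rightarrow> bool" where
  "min_vertex_cover A E C \<longleftrightarrow> vertex_cover A E C \<and> (\<forall>C'. C' \<subset> C \<longrightarrow> \<not> vertex_cover A E C')"

lemma vertex_cover_contains_min_vertex_cover:
  assumes "finite A" and "vertex_cover A E C"
  obtains C' where "C' \<subseteq> C" "min_vertex_cover A E C'"
proof -
  obtain C' where C': "C' \<subseteq> C" "vertex_cover A E C'"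
    and least: "\<And>D. D \<subseteq> C \<Longrightarrow> vertex_cover A E D \<Longrightarrow> card C' \<le> card D"
    using ex_has_least_nat[of "\<lambda>D. D \<subseteq> C \<and> vertex_cover A E D" C card] assms(2) by blast
  have "finite C'" using C'(2) assms(1) by (meson vertex_cover_def finite_subset)
  then have "\<not> vertex_cover A E D" if "D \<subset> C'" for D
    using least[of D] psubset_card_mono[of C' D] that C'(1) by fastforce
  then show thesis using that C' by (auto simp: min_vertex_cover_def)
qed

definition var_ideal :: "nat set \<Rightarrow> nat set \<Rightarrow> 'k::field mpoly set" where
  "var_ideal A C = monomial_ideal A (multiple_of (unit_exp ` C))"

lemma var_ideal_iff:
  "(p :: 'k::field mpoly) \<in> var_ideal A C \<longleftrightarrow>
    p \<in> polyring A \<and> (\<forall>m\<in>Poly_Mapping.keys p. Poly_Mapping.keys m \<inter> C \<noteq> {})"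
  by (auto simp: var_ideal_def monomial_ideal_def multiple_of_def unit_exp_adds_iff)

definition deg_ge2_on :: "nat set \<Rightarrow> (nat \<Rightarrow>\<^sub>0 nat) \<Rightarrow> bool" where
  "deg_ge2_on C m \<longleftrightarrow> (\<exists>i\<in>C. 2 \<le> Poly_Mapping.lookup m i) \<or>
    (\<exists>i\<in>C. \<exists>j\<in>C. i \<noteq> j \<and> i \<in> Poly_Mapping.keys m \<and> j \<in> Poly_Mapping.keys m)"

lemma deg_ge2_on_mono: "C' \<subseteq> C \<Longrightarrow> deg_ge2_on C' m \<Longrightarrow> deg_ge2_on C m"
  unfolding deg_ge2_on_def by blast

lemma multiple_of_two_unit_exps_iff:
  "multiple_of {g1 + g2 |g1 g2. g1 \<in> unit_exp ` C \<and> g2 \<in> unit_exp ` C} m \<longleftrightarrow> deg_ge2_on C m"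
proof
  assume "multiple_of {g1 + g2 |g1 g2. g1 \<in> unit_exp ` C \<and> g2 \<in> unit_exp ` C} m"
  then obtain i j where "i \<in> C" "j \<in> C" "unit_exp i + unit_exp j adds m"
    by (auto simp: multiple_of_def)
  then show "deg_ge2_on C m"
    unfolding deg_ge2_on_def unit_exp_add_unit_exp_adds_iff by (auto split: if_splits)
next
  assume "deg_ge2_on C m"
  then obtain i j where "i \<in> C" "j \<in> C" "unit_exp i + unit_exp j adds m"
    unfolding deg_ge2_on_def unit_exp_add_unit_exp_adds_iff by (metis (full_types))
  then show "multiple_of {g1 + g2 |g1 g2. g1 \<in> unit_exp ` C \<and> g2 \<in> unit_exp ` C} m"
    by (auto simp: multiple_of_def)
qed

lemma var_ideal_square:
  "C \<subseteq> A \<Longrightarrow> ideal_prod A (var_ideal A C) (var_ideal A C) =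
    (monomial_ideal A (deg_ge2_on C) :: 'k::field mpoly set)"
  unfolding var_ideal_def
  by (subst ideal_prod_monomial_ideals) (auto simp: multiple_of_two_unit_exps_iff[abs_def])

definition set_vars_zero :: "nat set \<Rightarrow> 'k::field mpoly \<Rightarrow> 'k mpoly" where
  "set_vars_zero C p = (\<Sum>m\<in>{m\<in>Poly_Mapping.keys p. Poly_Mapping.keys m \<inter> C = {}}.
     Poly_Mapping.single m (Poly_Mapping.lookup p m))"

lemma lookup_set_vars_zero:
  "Poly_Mapping.lookup (set_vars_zero C p) k =
    (if Poly_Mapping.keys k \<inter> C = {} then Poly_Mapping.lookup p k else 0)"
proof -
  have "Poly_Mapping.lookup (set_vars_zero C p) k =
      (\<Sum>m\<in>{m\<in>Poly_Mapping.keys p. Poly_Mapping.keys m \<inter> C = {}}.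
        if m = k then Poly_Mapping.lookup p m else 0)"
    by (simp add: set_vars_zero_def lookup_sum lookup_single when_def eq_commute)
  also have "\<dots> = (if Poly_Mapping.keys k \<inter> C = {} then Poly_Mapping.lookup p k else 0)"
    by (subst sum.delta) (auto simp: in_keys_iff)
  finally show ?thesis .
qed

lemma keys_set_vars_zero:
  "Poly_Mapping.keys (set_vars_zero C p) = {m\<in>Poly_Mapping.keys p. Poly_Mapping.keys m \<inter> C = {}}"
proof (rule set_eqI)
  fix m
  show "m \<in> Poly_Mapping.keys (set_vars_zero C p) \<longleftrightarrow>
      m \<in> {m\<in>Poly_Mapping.keys p. Poly_Mapping.keys m \<inter> C = {}}"
    by (simp only: mem_Collect_eq in_keys_iff[of m] lookup_set_vars_zero) auto
qed

lemma set_vars_zero_in_polyring: "p \<in> polyring A \<Longrightarrow> set_vars_zero C p \<in> polyring A"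
  by (auto simp: polyring_def keys_set_vars_zero)

lemma diff_set_vars_zero_in_var_ideal:
  "(p::'k::field mpoly) \<in> polyring A \<Longrightarrow> p - set_vars_zero C p \<in> var_ideal A C"
  by (auto simp: var_ideal_iff in_keys_iff lookup_minus lookup_set_vars_zero
      intro!: polyring_diff set_vars_zero_in_polyring)

lemma is_prime_ideal_var_ideal: "is_prime_ideal A (var_ideal A C :: 'k::field mpoly set)"
  unfolding is_prime_ideal_def
proof (intro conjI ballI impI)
  have ideal: "is_ideal A (var_ideal A C :: 'k mpoly set)"
    unfolding var_ideal_def by (rule is_ideal_monomial_ideal_multiple_of)
  then show "is_ideal A (var_ideal A C :: 'k mpoly set)" .
  have "(1 :: 'k mpoly) \<in> polyring A" "(1 :: 'k mpoly) \<notin> var_ideal A C"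
    by (simp_all add: polyring_def var_ideal_iff)
  then show "(var_ideal A C :: 'k mpoly set) \<noteq> polyring A" by blast
  fix a b :: "'k mpoly"
  assume a: "a \<in> polyring A" and b: "b \<in> polyring A" and ab: "a * b \<in> var_ideal A C"
  define a' where "a' = set_vars_zero C a"
  define b' where "b' = set_vars_zero C b"
  have da: "a - a' \<in> var_ideal A C" and db: "b - b' \<in> var_ideal A C"
    using a b diff_set_vars_zero_in_var_ideal by (auto simp: a'_def b'_def)
  have "a' \<in> polyring A"
    using a by (simp add: a'_def set_vars_zero_in_polyring)
  then have "a' * (b - b') + b * (a - a') \<in> var_ideal A C"
    using ideal b da db by (simp add: is_ideal_def)
  then have "a * b - (a' * (b - b') + b * (a - a')) \<in> var_ideal A C"
    using ab unfolding var_ideal_def by (rule monomial_ideal_diff[rotated])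
  moreover have "a * b - (a' * (b - b') + b * (a - a')) = a' * b'"
    by (simp add: algebra_simps)
  ultimately have in_ideal: "a' * b' \<in> var_ideal A C" by simp
  have "Poly_Mapping.keys m \<inter> C = {}" if "m \<in> Poly_Mapping.keys (a' * b')" for m
    using that by (rule in_keys_multE) (auto simp: a'_def b'_def keys_set_vars_zero keys_add_nat)
  with in_ideal have "a' * b' = 0"
    by (auto simp: var_ideal_iff simp flip: keys_eq_empty)
  then show "a \<in> var_ideal A C \<or> b \<in> var_ideal A C"
    using da db by auto
qed

lemma edge_ideal_subset_Ass:
  "P \<in> Ass A (edge_ideal A E :: 'k::field mpoly set) \<Longrightarrow> edge_ideal A E \<subseteq> P"
  using is_ideal_edge_ideal[of A E]
  by (auto simp: Ass_def is_ideal_def mult.commute)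

definition triangles_on :: "nat set \<Rightarrow> nat set set \<Rightarrow> nat set set" where
  "triangles_on A E = {T. T \<subseteq> A \<and> card T = 3 \<and> (\<forall>u\<in>T. \<forall>v\<in>T. u \<noteq> v \<longrightarrow> {u, v} \<in> E)}"

definition indep_set :: "nat set set \<Rightarrow> nat set \<Rightarrow> bool" where
  "indep_set E S \<longleftrightarrow> (\<forall>i\<in>S. \<forall>j\<in>S. {i, j} \<notin> E)"

locale simple_graph =
  fixes A :: "nat set" and E :: "nat set set"
  assumes finite_vertices: "finite A"
    and edges: "\<And>e. e \<in> E \<Longrightarrow> e \<subseteq> A \<and> card e = 2"
begin

lemma edgeE:
  assumes "e \<in> E"
  obtains i j where "e = {i, j}" "i \<noteq> j" "i \<in> A" "j \<in> A"
  using edges[OF assms] by (auto simp: card_2_iff)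

lemma edge_distinct: "{i, j} \<in> E \<Longrightarrow> i \<noteq> j"
  using edges[of "{i, j}"] by fastforce

lemma edge_vertices: "{i, j} \<in> E \<Longrightarrow> i \<in> A \<and> j \<in> A"
  using edges[of "{i, j}"] by simp

lemma multiple_of_edge_exps_add_indicator_iff:
  assumes C: "min_vertex_cover A E C"
  shows "multiple_of (edge_exps A E) (m + indicator_exp (A - C)) \<longleftrightarrow>
    Poly_Mapping.keys m \<inter> C \<noteq> {}"
proof -
  have keys_sum: "Poly_Mapping.keys (m + indicator_exp (A - C)) = Poly_Mapping.keys m \<union> (A - C)"
    using finite_vertices by (simp add: keys_add_nat keys_indicator_exp)
  show ?thesis
  proof
    assume "multiple_of (edge_exps A E) (m + indicator_exp (A - C))"
    then obtain i j where ij: "{i, j} \<in> E" "unit_exp i + unit_exp j adds m + indicator_exp (A - C)"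
      by (auto simp: multiple_of_def edge_exps_def)
    moreover have "{i, j} \<inter> C \<noteq> {}"
      using C ij(1) by (auto simp: min_vertex_cover_def vertex_cover_def)
    ultimately show "Poly_Mapping.keys m \<inter> C \<noteq> {}"
      using edge_distinct[OF ij(1)] by (auto simp: unit_exp_add_unit_exp_adds_iff keys_sum)
  next
    assume "Poly_Mapping.keys m \<inter> C \<noteq> {}"
    then obtain i where i: "i \<in> Poly_Mapping.keys m" "i \<in> C" by blast
    have "\<not> vertex_cover A E (C - {i})"
      using C i(2) by (auto simp: min_vertex_cover_def)
    moreover have "C \<subseteq> A"
      using C by (simp add: min_vertex_cover_def vertex_cover_def)
    ultimately obtain e where e: "e \<in> E" "e \<inter> (C - {i}) = {}"
      by (auto simp: vertex_cover_def)
    moreover have "e \<inter> C \<noteq> {}"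
      using C e(1) by (auto simp: min_vertex_cover_def vertex_cover_def)
    ultimately have "i \<in> e" by blast
    obtain w where "e = {i, w}" "w \<noteq> i" "w \<in> A"
      using edgeE[OF e(1)] \<open>i \<in> e\<close> by (metis insert_commute insertE singletonD)
    with e have w: "{i, w} \<in> E" "w \<noteq> i" "w \<in> A - C" by auto
    then have "unit_exp i + unit_exp w \<in> edge_exps A E"
      using edge_vertices by (auto simp: edge_exps_def)
    moreover have "unit_exp i + unit_exp w adds m + indicator_exp (A - C)"
      using w i by (auto simp: unit_exp_add_unit_exp_adds_iff keys_sum)
    ultimately show "multiple_of (edge_exps A E) (m + indicator_exp (A - C))"
      by (auto simp: multiple_of_def)
  qed
qed

lemma var_ideal_eq_colon:
  assumes C: "min_vertex_cover A E C"
  shows "(var_ideal A C :: 'k::field mpoly set) =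
    {g \<in> polyring A. g * mon (indicator_exp (A - C)) \<in> edge_ideal A E}"
proof (rule set_eqI)
  fix g :: "'k mpoly"
  have "(mon (indicator_exp (A - C)) :: 'k mpoly) \<in> polyring A"
    using finite_vertices by (intro polyring_single) (simp add: keys_indicator_exp)
  then have "g \<in> polyring A \<Longrightarrow> g * mon (indicator_exp (A - C)) \<in> polyring A"
    using polyring_mult by blast
  then show "g \<in> var_ideal A C \<longleftrightarrow> g \<in> {g \<in> polyring A. g * mon (indicator_exp (A - C)) \<in> edge_ideal A E}"
    by (auto simp: var_ideal_iff edge_ideal_eq_monomial_ideal monomial_ideal_def keys_mult_mon
        multiple_of_edge_exps_add_indicator_iff[OF C])
qed

lemma var_ideal_in_Ass:
  assumes "min_vertex_cover A E C"
  shows "(var_ideal A C :: 'k::field mpoly set) \<in> Ass A (edge_ideal A E)"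
proof -
  have "(mon (indicator_exp (A - C)) :: 'k mpoly) \<in> polyring A"
    using finite_vertices by (intro polyring_single) (simp add: keys_indicator_exp)
  then show ?thesis
    unfolding Ass_def using is_prime_ideal_var_ideal var_ideal_eq_colon[OF assms] by blast
qed

lemma prime_contains_var_ideal:
  assumes P: "is_prime_ideal A (P :: 'k::field mpoly set)" and sub: "edge_ideal A E \<subseteq> P"
  obtains C where "min_vertex_cover A E C" "var_ideal A C \<subseteq> P"
proof -
  define C where "C = {i \<in> A. (mon (unit_exp i) :: 'k mpoly) \<in> P}"
  have "vertex_cover A E C"
    unfolding vertex_cover_def
  proof (intro conjI ballI)
    fix e assume e: "e \<in> E"
    then obtain i j where ij: "e = {i, j}" "i \<in> A" "j \<in> A"
      by (blast elim: edgeE)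
    have "(mon (unit_exp i) :: 'k mpoly) * mon (unit_exp j) = xx i j"
      by (simp add: xx_def unit_exp_def mult_single)
    also have "\<dots> \<in> P"
      using sub ij e unfolding edge_ideal_def by (blast intro: ideal_gen.gen)
    finally have "(mon (unit_exp i) :: 'k mpoly) * mon (unit_exp j) \<in> P" .
    moreover have "(mon (unit_exp i) :: 'k mpoly) \<in> polyring A" "(mon (unit_exp j) :: 'k mpoly) \<in> polyring A"
      using ij by (simp_all add: polyring_single)
    ultimately have "(mon (unit_exp i) :: 'k mpoly) \<in> P \<or> (mon (unit_exp j) :: 'k mpoly) \<in> P"
      using P unfolding is_prime_ideal_def by blast
    then show "e \<inter> C \<noteq> {}"
      using ij by (auto simp: C_def)
  qed (auto simp: C_def)
  with finite_vertices obtain C' where C': "C' \<subseteq> C" "min_vertex_cover A E C'"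
    by (rule vertex_cover_contains_min_vertex_cover)
  have "var_ideal A C' = ideal_gen A (mon ` unit_exp ` C')"
    unfolding var_ideal_def using C' by (intro ideal_gen_monomials[symmetric]) (auto simp: C_def)
  also have "\<dots> \<subseteq> P"
    using C' P by (intro ideal_gen_subset) (auto simp: C_def is_prime_ideal_def)
  finally show thesis using that C' by blast
qed

definition deg_ge2_on_covers :: "(nat \<Rightarrow>\<^sub>0 nat) \<Rightarrow> bool" where
  "deg_ge2_on_covers m \<longleftrightarrow> (\<forall>C. vertex_cover A E C \<longrightarrow> deg_ge2_on C m)"

theorem symb_sq_edge_ideal:
  "symb_sq A (edge_ideal A E :: 'k::field mpoly set) = monomial_ideal A deg_ge2_on_covers"
proof (rule set_eqI)
  fix p :: "'k mpoly"
  have square: "ideal_prod A (var_ideal A C) (var_ideal A C) =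
      (monomial_ideal A (deg_ge2_on C) :: 'k mpoly set)" if "min_vertex_cover A E C" for C
    using that by (intro var_ideal_square) (simp add: min_vertex_cover_def vertex_cover_def)
  show "p \<in> symb_sq A (edge_ideal A E) \<longleftrightarrow> p \<in> monomial_ideal A deg_ge2_on_covers"
  proof
    assume p: "p \<in> symb_sq A (edge_ideal A E)"
    have "deg_ge2_on C m" if m: "m \<in> Poly_Mapping.keys p" and C: "vertex_cover A E C" for m C
    proof -
      obtain C' where C': "C' \<subseteq> C" "min_vertex_cover A E C'"
        using finite_vertices C by (rule vertex_cover_contains_min_vertex_cover)
      then have "p \<in> ideal_prod A (var_ideal A C') (var_ideal A C')"
        using p var_ideal_in_Ass[OF C'(2)] by (auto simp: symb_sq_def)
      then show ?thesis
        using m C' square by (auto simp: monomial_ideal_def intro: deg_ge2_on_mono)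
    qed
    then show "p \<in> monomial_ideal A deg_ge2_on_covers"
      using p by (auto simp: symb_sq_def monomial_ideal_def deg_ge2_on_covers_def)
  next
    assume p: "p \<in> monomial_ideal A deg_ge2_on_covers"
    have "p \<in> ideal_prod A P P" if P: "P \<in> Ass A (edge_ideal A E)" for P
    proof -
      have "is_prime_ideal A P"
        using P by (simp add: Ass_def)
      then obtain C where C: "min_vertex_cover A E C" "var_ideal A C \<subseteq> P"
        using edge_ideal_subset_Ass[OF P] by (rule prime_contains_var_ideal)
      then have "p \<in> ideal_prod A (var_ideal A C) (var_ideal A C)"
        using p square[OF C(1)]
        by (auto simp: monomial_ideal_def deg_ge2_on_covers_def min_vertex_cover_def)
      also have "\<dots> \<subseteq> ideal_prod A P P"
        unfolding ideal_prod_def using C(2) by (intro ideal_gen_mono) blast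
      finally show ?thesis .
    qed
    then show "p \<in> symb_sq A (edge_ideal A E)"
      using p by (auto simp: symb_sq_def monomial_ideal_def)
  qed
qed

section \<open>Monomials of the second symbolic power outside the square\<close>

definition divisible_by_two_edges :: "(nat \<Rightarrow>\<^sub>0 nat) \<Rightarrow> bool" where
  "divisible_by_two_edges m \<longleftrightarrow>
    multiple_of {g1 + g2 |g1 g2. g1 \<in> edge_exps A E \<and> g2 \<in> edge_exps A E} m"

lemma edge_ideal_square:
  "ideal_prod A (edge_ideal A E) (edge_ideal A E) =
    (monomial_ideal A divisible_by_two_edges :: 'k::field mpoly set)"
  unfolding edge_ideal_eq_monomial_ideal divisible_by_two_edges_def[abs_def]
  by (rule ideal_prod_monomial_ideals) (auto simp: edge_exps_def keys_add_nat)

lemma divisible_by_two_edgesI: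
  assumes "{i, j} \<in> E" "{k, l} \<in> E" "unit_exp i + unit_exp j + unit_exp k + unit_exp l adds m"
  shows "divisible_by_two_edges m"
proof -
  have "unit_exp i + unit_exp j \<in> edge_exps A E" "unit_exp k + unit_exp l \<in> edge_exps A E"
    using assms(1,2) edge_vertices by (auto simp: edge_exps_def)
  then show ?thesis
    using assms(3) unfolding divisible_by_two_edges_def multiple_of_def
    by (metis (mono_tags, lifting) add.assoc mem_Collect_eq)
qed

lemma divisible_by_two_edgesE:
  assumes "divisible_by_two_edges m"
  obtains i j k l where "{i, j} \<in> E" "{k, l} \<in> E"
    "unit_exp i + unit_exp j + unit_exp k + unit_exp l adds m"
  using assms unfolding divisible_by_two_edges_def multiple_of_def edge_exps_def
  by (auto simp: add.assoc)

lemma divisible_by_two_edges_if_disjoint: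
  assumes "{a, b} \<in> E" "{c, d} \<in> E" "{a, b} \<inter> {c, d} = {}"
    and "{a, b, c, d} \<subseteq> Poly_Mapping.keys m"
  shows "divisible_by_two_edges m"
  using assms(1,2) edge_distinct[OF assms(1)] edge_distinct[OF assms(2)] assms(3,4)
  by (intro divisible_by_two_edgesI[OF assms(1,2)])
    (auto simp: adds_def lookup_add lookup_unit_exp in_keys_iff Suc_le_eq)

lemma divisible_by_two_edges_if_path:
  assumes "{a, b} \<in> E" "{b, c} \<in> E" "a \<noteq> c"
    and "a \<in> Poly_Mapping.keys m" "c \<in> Poly_Mapping.keys m" "2 \<le> Poly_Mapping.lookup m b"
  shows "divisible_by_two_edges m"
  using edge_distinct[OF assms(1)] edge_distinct[OF assms(2)] assms(3-)
  by (intro divisible_by_two_edgesI[OF assms(1,2)])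
    (auto simp: adds_def lookup_add lookup_unit_exp in_keys_iff Suc_le_eq)

lemma divisible_by_two_edges_if_double:
  assumes "{a, b} \<in> E" "2 \<le> Poly_Mapping.lookup m a" "2 \<le> Poly_Mapping.lookup m b"
  shows "divisible_by_two_edges m"
  using edge_distinct[OF assms(1)] assms(2,3)
  by (intro divisible_by_two_edgesI[OF assms(1,1)]) (auto simp: adds_def lookup_add lookup_unit_exp)

lemma divisible_by_two_edges_imp_deg_ge2_on_covers:
  assumes "divisible_by_two_edges m"
  shows "deg_ge2_on_covers m"
  unfolding deg_ge2_on_covers_def
proof (intro allI impI)
  fix C assume C: "vertex_cover A E C"
  obtain i j k l where ij: "{i, j} \<in> E" and kl: "{k, l} \<in> E"
    and "unit_exp i + unit_exp j + unit_exp k + unit_exp l adds m"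
    using assms by (rule divisible_by_two_edgesE)
  then have le: "Poly_Mapping.lookup (unit_exp i + unit_exp j + unit_exp k + unit_exp l) v \<le>
      Poly_Mapping.lookup m v" for v
    by (simp add: adds_def)
  have "{i, j} \<inter> C \<noteq> {}" "{k, l} \<inter> C \<noteq> {}"
    using C ij kl by (auto simp: vertex_cover_def)
  then obtain x y where xy: "x \<in> {i, j}" "x \<in> C" "y \<in> {k, l}" "y \<in> C"
    by blast
  have "Poly_Mapping.lookup (unit_exp x + unit_exp y) v \<le> Poly_Mapping.lookup m v" for v
    using le[of v] xy(1,3) by (auto simp: lookup_add lookup_unit_exp)
  then have "unit_exp x + unit_exp y adds m"
    by (simp add: adds_def)
  then show "deg_ge2_on C m"
    using xy(2,4) unfolding multiple_of_two_unit_exps_iff[symmetric] multiple_of_def by blast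
qed

lemma finite_triangle: "T \<in> triangles_on A E \<Longrightarrow> finite T"
  by (rule card_ge_0_finite) (simp add: triangles_on_def)

lemma finite_triangles_on: "finite (triangles_on A E)"
  by (rule finite_subset[OF _ finite_Pow_iff[THEN iffD2, OF finite_vertices]])
    (auto simp: triangles_on_def)

lemma triangle_at_vertex:
  assumes T: "T \<in> triangles_on A E" and v: "v \<in> T"
  obtains p q where "T = {v, p, q}" "v \<noteq> p" "v \<noteq> q" "p \<noteq> q"
    "{v, p} \<in> E" "{v, q} \<in> E" "{p, q} \<in> E"
proof -
  have "card (T - {v}) = 2"
    using T v by (simp add: triangles_on_def)
  then obtain p q where pq: "T - {v} = {p, q}" "p \<noteq> q"
    by (auto simp: card_2_iff)
  then have "T = {v, p, q}" "v \<noteq> p" "v \<noteq> q"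
    using v by auto
  then show thesis
    using that pq(2) T by (auto simp: triangles_on_def)
qed

lemma triangle_in_triangles_on:
  assumes "{a, b} \<in> E" "{b, c} \<in> E" "{a, c} \<in> E" "a \<noteq> b" "b \<noteq> c" "a \<noteq> c"
  shows "{a, b, c} \<in> triangles_on A E"
  using assms edge_vertices unfolding triangles_on_def by (auto simp: insert_commute)

lemma indicator_exp_add_deg_ge2_on_covers:
  assumes "T \<in> triangles_on A E"
  shows "deg_ge2_on_covers (indicator_exp T + m)"
  unfolding deg_ge2_on_covers_def
proof (intro allI impI)
  fix C assume C: "vertex_cover A E C"
  obtain a where "a \<in> T"
    using assms by (fastforce simp: triangles_on_def)
  then obtain p q where T: "T = {a, p, q}" "a \<noteq> p" "a \<noteq> q" "p \<noteq> q"
    and edges: "{a, p} \<in> E" "{a, q} \<in> E" "{p, q} \<in> E"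
    using assms triangle_at_vertex by metis
  have "T \<subseteq> Poly_Mapping.keys (indicator_exp T + m)"
    using finite_triangle[OF assms] by (simp add: keys_add_nat keys_indicator_exp)
  moreover have "(a \<in> C \<and> p \<in> C) \<or> (a \<in> C \<and> q \<in> C) \<or> (p \<in> C \<and> q \<in> C)"
    using C edges by (auto simp: vertex_cover_def)
  ultimately show "deg_ge2_on C (indicator_exp T + m)"
    unfolding deg_ge2_on_def using T by blast
qed

lemma edges_in_triangle_intersect:
  assumes "T \<in> triangles_on A E" "{i, j} \<in> E" "{k, l} \<in> E" "{i, j, k, l} \<subseteq> T"
  shows "{i, j} \<inter> {k, l} \<noteq> {}"
proof
  assume "{i, j} \<inter> {k, l} = {}"
  then have "card {i, j, k, l} = 4"
    using edge_distinct[OF assms(2)] edge_distinct[OF assms(3)] by simp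
  moreover have "card {i, j, k, l} \<le> card T"
    using card_mono[OF finite_triangle[OF assms(1)] assms(4)] .
  ultimately show False
    using assms(1) by (simp add: triangles_on_def)
qed

lemma support_edge_in_triangle:
  assumes T: "T \<in> triangles_on A E"
    and m: "Poly_Mapping.keys m \<subseteq> A - closed_nbhd E T" "indep_set E (Poly_Mapping.keys m)"
    and xy: "{x, y} \<in> E" "x \<in> Poly_Mapping.keys (indicator_exp T + m)"
      "y \<in> Poly_Mapping.keys (indicator_exp T + m)"
  shows "x \<in> T"
proof (rule ccontr)
  have keys: "Poly_Mapping.keys (indicator_exp T + m) = T \<union> Poly_Mapping.keys m"
    using finite_triangle[OF T] by (simp add: keys_add_nat keys_indicator_exp)
  assume "x \<notin> T"
  then have "x \<in> Poly_Mapping.keys m" "x \<notin> closed_nbhd E T"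
    using xy(2) m(1) keys by auto
  moreover have "y \<notin> T"
    using xy(1) \<open>x \<notin> closed_nbhd E T\<close> by (auto simp: closed_nbhd_def)
  ultimately show False
    using xy m(2) keys by (auto simp: indep_set_def)
qed

lemma indicator_exp_add_not_divisible_by_two_edges:
  assumes T: "T \<in> triangles_on A E"
    and m: "Poly_Mapping.keys m \<subseteq> A - closed_nbhd E T" "indep_set E (Poly_Mapping.keys m)"
  shows "\<not> divisible_by_two_edges (indicator_exp T + m)"
proof
  let ?m = "indicator_exp T + m"
  assume "divisible_by_two_edges ?m"
  then obtain i j k l where ij: "{i, j} \<in> E" and kl: "{k, l} \<in> E"
    and "unit_exp i + unit_exp j + unit_exp k + unit_exp l adds ?m"
    by (rule divisible_by_two_edgesE)
  then have le: "Poly_Mapping.lookup (unit_exp i + unit_exp j + unit_exp k + unit_exp l) v \<le>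
      Poly_Mapping.lookup ?m v" for v
    by (simp add: adds_def)
  have "{i, j, k, l} \<subseteq> Poly_Mapping.keys ?m"
    using le[of i] le[of j] le[of k] le[of l] by (auto simp: lookup_add lookup_unit_exp in_keys_iff)
  moreover have "{j, i} \<in> E" "{l, k} \<in> E"
    using ij kl by (simp_all add: insert_commute)
  ultimately have ijkl: "{i, j, k, l} \<subseteq> T"
    using support_edge_in_triangle[OF T m] ij kl by simp
  then obtain v where v: "v \<in> {i, j}" "v \<in> {k, l}"
    using edges_in_triangle_intersect[OF T ij kl] by blast
  have "2 \<le> Poly_Mapping.lookup ?m v"
    using le[of v] v by (auto simp: lookup_add lookup_unit_exp)
  moreover have "v \<in> T" "v \<notin> Poly_Mapping.keys m"
    using v ijkl m(1) by (auto simp: closed_nbhd_def)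
  ultimately show False
    using finite_triangle[OF T] by (simp add: lookup_add lookup_indicator_exp in_keys_iff)
qed

lemma edge_through:
  assumes "{i, j} \<in> E" "x \<in> {i, j}"
  obtains y where "{x, y} \<in> E" "y \<in> {i, j}"
  using assms by (auto simp: insert_commute)

lemma simple_center_of_path:
  assumes nd: "\<not> divisible_by_two_edges m"
    and no_triangle: "\<not> (\<exists>T\<in>triangles_on A E. T \<subseteq> Poly_Mapping.keys m)"
    and ab: "{a, b} \<in> E" "a \<in> Poly_Mapping.keys m" "b \<in> Poly_Mapping.keys m"
    and bw: "{b, w} \<in> E" "w \<in> Poly_Mapping.keys m" "w \<noteq> a"
  shows "Poly_Mapping.lookup m b = 1"
    and "\<And>p q. {p, q} \<in> E \<Longrightarrow> p \<in> Poly_Mapping.keys m \<Longrightarrow> q \<in> Poly_Mapping.keys m \<Longrightarrow> b \<in> {p, q}"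
proof -
  let ?S = "Poly_Mapping.keys m"
  have a_ne_b: "a \<noteq> b" by (rule edge_distinct[OF ab(1)])
  show "Poly_Mapping.lookup m b = 1"
  proof (rule ccontr)
    assume "Poly_Mapping.lookup m b \<noteq> 1"
    then have "2 \<le> Poly_Mapping.lookup m b" using ab(3) by (simp add: in_keys_iff)
    then show False
      using divisible_by_two_edges_if_path[OF ab(1) bw(1)] nd ab(2) bw(2,3) by auto
  qed
  fix p q assume pq: "{p, q} \<in> E" "p \<in> ?S" "q \<in> ?S"
  show "b \<in> {p, q}"
  proof (rule ccontr)
    assume "b \<notin> {p, q}"
    moreover have "a \<in> {p, q}"
      using divisible_by_two_edges_if_disjoint[OF ab(1) pq(1)] nd ab pq \<open>b \<notin> {p, q}\<close> by auto
    then obtain y where "{a, y} \<in> E" "y \<in> {p, q}"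
      by (rule edge_through[OF pq(1)])
    ultimately have y: "{a, y} \<in> E" "y \<in> ?S" "y \<noteq> b" using pq by auto
    show False
    proof (cases "y = w")
      case True
      then have "{a, b, w} \<in> triangles_on A E"
        using triangle_in_triangles_on[OF ab(1) bw(1)] y(1) a_ne_b bw(3) edge_distinct[OF bw(1)]
        by auto
      moreover have "{a, b, w} \<subseteq> ?S" using ab(2,3) bw(2) by simp
      ultimately show False using no_triangle by blast
    next
      case False
      then show False
        using divisible_by_two_edges_if_disjoint[OF y(1) bw(1)] nd ab(2,3) y bw a_ne_b by auto
    qed
  qed
qed

lemma star_center_exists:
  assumes nd: "\<not> divisible_by_two_edges m"
    and no_triangle: "\<not> (\<exists>T\<in>triangles_on A E. T \<subseteq> Poly_Mapping.keys m)"
    and ab: "{a, b} \<in> E" "a \<in> Poly_Mapping.keys m" "b \<in> Poly_Mapping.keys m"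
    and a_simple: "Poly_Mapping.lookup m a = 1"
  obtains c where "c \<in> Poly_Mapping.keys m" "Poly_Mapping.lookup m c = 1"
    "\<And>i j. {i, j} \<in> E \<Longrightarrow> i \<in> Poly_Mapping.keys m \<Longrightarrow> j \<in> Poly_Mapping.keys m \<Longrightarrow> c \<in> {i, j}"
proof (cases "\<forall>i j. {i, j} \<in> E \<and> i \<in> Poly_Mapping.keys m \<and> j \<in> Poly_Mapping.keys m \<longrightarrow> a \<in> {i, j}")
  case True
  then show thesis using that ab(2) a_simple by blast
next
  case False
  then obtain i j where ij: "{i, j} \<in> E" "i \<in> Poly_Mapping.keys m" "j \<in> Poly_Mapping.keys m"
    "a \<notin> {i, j}"
    by blast
  then have "b \<in> {i, j}"
    using divisible_by_two_edges_if_disjoint[OF ab(1) ij(1)] nd ab by auto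
  then obtain w where "{b, w} \<in> E" "w \<in> {i, j}"
    by (rule edge_through[OF ij(1)])
  with ij have w: "{b, w} \<in> E" "w \<in> Poly_Mapping.keys m" "w \<noteq> a" by auto
  show thesis
    using that ab(3) simple_center_of_path[OF nd no_triangle ab w] by blast
qed

lemma not_deg_ge2_on_covers_if_simple_transversal:
  assumes m: "Poly_Mapping.keys m \<subseteq> A"
    and X: "X \<subseteq> Poly_Mapping.keys m" "\<And>c. c \<in> X \<Longrightarrow> Poly_Mapping.lookup m c = 1"
      "\<And>c c'. c \<in> X \<Longrightarrow> c' \<in> X \<Longrightarrow> c = c'"
    and meets: "\<And>i j. {i, j} \<in> E \<Longrightarrow> i \<in> Poly_Mapping.keys m \<Longrightarrow> j \<in> Poly_Mapping.keys m \<Longrightarrow>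
      {i, j} \<inter> X \<noteq> {}"
  shows "\<not> deg_ge2_on_covers m"
proof -
  let ?C = "X \<union> (A - Poly_Mapping.keys m)"
  have "vertex_cover A E ?C"
    unfolding vertex_cover_def
  proof (intro conjI ballI)
    show "?C \<subseteq> A" using X(1) m by blast
    fix e assume "e \<in> E"
    then obtain i j where "e = {i, j}" "i \<in> A" "j \<in> A"
      by (blast elim: edgeE)
    with \<open>e \<in> E\<close> meets[of i j] show "e \<inter> ?C \<noteq> {}" by blast
  qed
  moreover have "\<not> deg_ge2_on ?C m"
  proof
    have "Poly_Mapping.lookup m i \<le> 1" if "i \<in> ?C" for i
      using that by (cases "i \<in> X") (auto simp: X(2) not_in_keys_iff_lookup_eq_zero)
    moreover have "i = j" if "i \<in> ?C" "j \<in> ?C" "i \<in> Poly_Mapping.keys m" "j \<in> Poly_Mapping.keys m" for i j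
      using that X(3) by blast
    moreover assume "deg_ge2_on ?C m"
    ultimately show False
      unfolding deg_ge2_on_def by fastforce
  qed
  ultimately show ?thesis
    by (auto simp: deg_ge2_on_covers_def)
qed

lemma triangle_free_support_not_deg_ge2_on_covers:
  assumes m: "Poly_Mapping.keys m \<subseteq> A" "\<not> divisible_by_two_edges m"
    and no_triangle: "\<not> (\<exists>T\<in>triangles_on A E. T \<subseteq> Poly_Mapping.keys m)"
  shows "\<not> deg_ge2_on_covers m"
proof (cases "\<exists>i j. {i, j} \<in> E \<and> i \<in> Poly_Mapping.keys m \<and> j \<in> Poly_Mapping.keys m")
  case False
  then show ?thesis
    by (intro not_deg_ge2_on_covers_if_simple_transversal[OF m(1), of "{}"]) auto
next
  case True
  then obtain a b where ab: "{a, b} \<in> E" "a \<in> Poly_Mapping.keys m" "b \<in> Poly_Mapping.keys m"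
    by blast
  have "Poly_Mapping.lookup m a = 1 \<or> Poly_Mapping.lookup m b = 1"
  proof (rule ccontr)
    assume "\<not> ?thesis"
    then have "2 \<le> Poly_Mapping.lookup m a" "2 \<le> Poly_Mapping.lookup m b"
      using ab(2,3) by (auto simp: in_keys_iff)
    then show False
      using divisible_by_two_edges_if_double[OF ab(1)] m(2) by blast
  qed
  then obtain c where c: "c \<in> Poly_Mapping.keys m" "Poly_Mapping.lookup m c = 1"
    "\<And>i j. {i, j} \<in> E \<Longrightarrow> i \<in> Poly_Mapping.keys m \<Longrightarrow> j \<in> Poly_Mapping.keys m \<Longrightarrow> c \<in> {i, j}"
  proof
    assume "Poly_Mapping.lookup m a = 1"
    then show thesis
      by (rule star_center_exists[OF m(2) no_triangle ab]) (rule that)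
  next
    have "{b, a} \<in> E" using ab(1) by (simp add: insert_commute)
    moreover assume "Poly_Mapping.lookup m b = 1"
    ultimately show thesis
      by (rule star_center_exists[OF m(2) no_triangle _ ab(3) ab(2)]) (rule that)
  qed
  then show ?thesis
    by (intro not_deg_ge2_on_covers_if_simple_transversal[OF m(1), of "{c}"]) auto
qed

lemma lookup_triangle_vertex:
  assumes "\<not> divisible_by_two_edges m" "T \<in> triangles_on A E" "T \<subseteq> Poly_Mapping.keys m" "v \<in> T"
  shows "Poly_Mapping.lookup m v = 1"
proof (rule ccontr)
  obtain p q where "T = {v, p, q}" "p \<noteq> q" "{v, p} \<in> E" "{v, q} \<in> E"
    using triangle_at_vertex[OF assms(2,4)] by metis
  moreover assume "Poly_Mapping.lookup m v \<noteq> 1"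
  then have "2 \<le> Poly_Mapping.lookup m v"
    using assms(3,4) by (force simp: in_keys_iff)
  ultimately show False
    using divisible_by_two_edges_if_path[of p v q m] assms(1,3) by (auto simp: insert_commute)
qed

lemma support_off_triangle_avoids_closed_nbhd:
  assumes "\<not> divisible_by_two_edges m" "T \<in> triangles_on A E" "T \<subseteq> Poly_Mapping.keys m"
    and "v \<in> Poly_Mapping.keys m" "v \<notin> T"
  shows "v \<notin> closed_nbhd E T"
proof
  assume "v \<in> closed_nbhd E T"
  then obtain t where t: "t \<in> T" "{v, t} \<in> E"
    using assms(5) by (auto simp: closed_nbhd_def)
  obtain p q where "T = {t, p, q}" "t \<noteq> p" "t \<noteq> q" "{p, q} \<in> E"
    using triangle_at_vertex[OF assms(2) t(1)] by metis
  then show False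
    using divisible_by_two_edges_if_disjoint[OF t(2), of p q m] assms edge_distinct[OF t(2)]
    by auto
qed

lemma support_off_triangle_indep:
  assumes "\<not> divisible_by_two_edges m" "T \<in> triangles_on A E" "T \<subseteq> Poly_Mapping.keys m"
  shows "indep_set E (Poly_Mapping.keys m - T)"
  unfolding indep_set_def
proof (intro ballI notI)
  fix i j assume ij: "i \<in> Poly_Mapping.keys m - T" "j \<in> Poly_Mapping.keys m - T" "{i, j} \<in> E"
  obtain a where "a \<in> T"
    using assms(2) by (fastforce simp: triangles_on_def)
  then obtain p q where "T = {a, p, q}" "{a, p} \<in> E"
    using triangle_at_vertex[OF assms(2)] by metis
  then show False
    using divisible_by_two_edges_if_disjoint[OF ij(3), of a p m] assms ij by auto
qed

lemma indicator_exp_add_decomposition: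
  assumes m: "Poly_Mapping.keys m \<subseteq> A" "deg_ge2_on_covers m" "\<not> divisible_by_two_edges m"
  obtains T m' where "T \<in> triangles_on A E" "m = indicator_exp T + m'"
    "Poly_Mapping.keys m' \<subseteq> A - closed_nbhd E T" "indep_set E (Poly_Mapping.keys m')"
proof -
  obtain T where T: "T \<in> triangles_on A E" "T \<subseteq> Poly_Mapping.keys m"
    using triangle_free_support_not_deg_ge2_on_covers[OF m(1,3)] m(2) by blast
  have finite_T: "finite T" by (rule finite_triangle[OF T(1)])
  define m' where "m' = m - indicator_exp T"
  have lookup_m': "Poly_Mapping.lookup m' v = (if v \<in> T then 0 else Poly_Mapping.lookup m v)" for v
    using lookup_triangle_vertex[OF m(3) T]
    by (simp add: m'_def lookup_minus lookup_indicator_exp finite_T)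
  have keys_m': "Poly_Mapping.keys m' = Poly_Mapping.keys m - T"
    by (auto simp: in_keys_iff lookup_m' split: if_splits)
  have "m = indicator_exp T + m'"
    using lookup_triangle_vertex[OF m(3) T]
    by (intro poly_mapping_eqI) (simp add: lookup_add lookup_indicator_exp finite_T lookup_m')
  moreover have "Poly_Mapping.keys m' \<subseteq> A - closed_nbhd E T"
    using support_off_triangle_avoids_closed_nbhd[OF m(3) T] m(1) keys_m' by blast
  moreover have "indep_set E (Poly_Mapping.keys m')"
    using support_off_triangle_indep[OF m(3) T] keys_m' by simp
  ultimately show thesis
    by (rule that[OF T(1)])
qed

lemma indicator_exp_add_triangle_unique:
  assumes T: "T \<in> triangles_on A E" and T': "T' \<in> triangles_on A E"
    and m: "Poly_Mapping.keys m \<subseteq> A - closed_nbhd E T" "indep_set E (Poly_Mapping.keys m)"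
    and eq: "indicator_exp T + m = indicator_exp T' + m'"
  shows "T = T'"
proof -
  have "T' \<subseteq> Poly_Mapping.keys (indicator_exp T' + m')"
    using finite_triangle[OF T'] by (simp add: keys_add_nat keys_indicator_exp)
  then have in_support: "T' \<subseteq> T \<union> Poly_Mapping.keys m"
    using finite_triangle[OF T] by (simp add: eq[symmetric] keys_add_nat keys_indicator_exp)
  have "T' \<subseteq> T"
  proof
    fix v assume v: "v \<in> T'"
    show "v \<in> T"
    proof (rule ccontr)
      assume "v \<notin> T"
      with in_support v have v_m: "v \<in> Poly_Mapping.keys m" by blast
      obtain p q where p: "{v, p} \<in> E" "T' = {v, p, q}"
        using triangle_at_vertex[OF T' v] by metis
      show False
      proof (cases "p \<in> T")
        case True
        then have "v \<in> closed_nbhd E T"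
          using p(1) by (auto simp: closed_nbhd_def)
        then show False using m(1) v_m by blast
      next
        case False
        then have "p \<in> Poly_Mapping.keys m" using in_support p(2) by blast
        then show False using m(2) v_m p(1) by (auto simp: indep_set_def)
      qed
    qed
  qed
  moreover have "card T' = card T"
    using T T' by (simp add: triangles_on_def)
  ultimately show ?thesis
    using card_subset_eq[OF finite_triangle[OF T]] by metis
qed

section \<open>Counting the monomial bases\<close>

text \<open>The monomial bases of \<open>M\<close> in degree \<open>d\<close> and of \<open>S\<^sub>T/I\<^sub>T\<close> in degree \<open>d - 3\<close>.\<close>
definition quotient_basis :: "nat \<Rightarrow> (nat \<Rightarrow>\<^sub>0 nat) set" where
  "quotient_basis d = {m. Poly_Mapping.keys m \<subseteq> A \<and> mdeg m = d \<and>
     deg_ge2_on_covers m \<and> \<not> divisible_by_two_edges m}"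

definition triangle_quotient_basis :: "nat set \<Rightarrow> nat \<Rightarrow> (nat \<Rightarrow>\<^sub>0 nat) set" where
  "triangle_quotient_basis T d = {m. Poly_Mapping.keys m \<subseteq> A - closed_nbhd E T \<and>
     mdeg m + 3 = d \<and> indep_set E (Poly_Mapping.keys m)}"

lemma quotient_basis_eq_UN:
  "quotient_basis d =
    (\<Union>T\<in>triangles_on A E. (+) (indicator_exp T) ` triangle_quotient_basis T d)"
proof (intro equalityI subsetI)
  fix m assume "m \<in> quotient_basis d"
  then have m: "Poly_Mapping.keys m \<subseteq> A" "mdeg m = d" "deg_ge2_on_covers m"
    "\<not> divisible_by_two_edges m"
    by (auto simp: quotient_basis_def)
  obtain T m' where T: "T \<in> triangles_on A E" "m = indicator_exp T + m'"
    "Poly_Mapping.keys m' \<subseteq> A - closed_nbhd E T" "indep_set E (Poly_Mapping.keys m')"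
    using m(1,3,4) by (rule indicator_exp_add_decomposition)
  have "card T = 3"
    using T(1) by (simp add: triangles_on_def)
  then have "mdeg m' + 3 = d"
    using m(2) T(2) finite_triangle[OF T(1)] by (simp add: mdeg_add mdeg_indicator_exp)
  then have "m' \<in> triangle_quotient_basis T d"
    using T(3,4) by (simp add: triangle_quotient_basis_def)
  then show "m \<in> (\<Union>T\<in>triangles_on A E. (+) (indicator_exp T) ` triangle_quotient_basis T d)"
    using T(1,2) by blast
next
  fix m assume "m \<in> (\<Union>T\<in>triangles_on A E. (+) (indicator_exp T) ` triangle_quotient_basis T d)"
  then obtain T m' where T: "T \<in> triangles_on A E" "m = indicator_exp T + m'"
    and "m' \<in> triangle_quotient_basis T d"
    by blast
  then have m': "Poly_Mapping.keys m' \<subseteq> A - closed_nbhd E T" "mdeg m' + 3 = d"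
      "indep_set E (Poly_Mapping.keys m')"
    by (simp_all add: triangle_quotient_basis_def)
  have T_props: "T \<subseteq> A" "finite T" "card T = 3"
    using T(1) finite_triangle[OF T(1)] by (simp_all add: triangles_on_def)
  have "Poly_Mapping.keys m \<subseteq> A"
    using T(2) T_props(1,2) m'(1) by (auto simp: keys_add_nat keys_indicator_exp)
  moreover have "mdeg m = d"
    using T(2) T_props(2,3) m'(2) by (simp add: mdeg_add mdeg_indicator_exp)
  moreover have "deg_ge2_on_covers m" "\<not> divisible_by_two_edges m"
    using T(2) indicator_exp_add_deg_ge2_on_covers[OF T(1)]
      indicator_exp_add_not_divisible_by_two_edges[OF T(1) m'(1,3)] by simp_all
  ultimately show "m \<in> quotient_basis d"
    by (simp add: quotient_basis_def)
qed

lemma card_quotient_basis: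
  "card (quotient_basis d) = (\<Sum>T\<in>triangles_on A E. card (triangle_quotient_basis T d))"
proof -
  have "finite (triangle_quotient_basis T d)" for T
    by (rule finite_subset[OF _ finite_monomials_of_degree[OF finite_vertices, of "d - 3"]])
      (auto simp: triangle_quotient_basis_def)
  moreover have "(+) (indicator_exp T) ` triangle_quotient_basis T d \<inter>
      (+) (indicator_exp T') ` triangle_quotient_basis T' d = {}"
    if "T \<in> triangles_on A E" "T' \<in> triangles_on A E" "T \<noteq> T'" for T T'
    using indicator_exp_add_triangle_unique[OF that(1,2)] that(3)
    by (auto simp: triangle_quotient_basis_def)
  ultimately have "card (quotient_basis d) =
      (\<Sum>T\<in>triangles_on A E. card ((+) (indicator_exp T) ` triangle_quotient_basis T d))"
    unfolding quotient_basis_eq_UN by (intro card_UN_disjoint finite_triangles_on) auto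
  then show ?thesis
    by (simp add: card_image)
qed

lemma hilb_symb_sq_edge_ideal:
  assumes "0 \<le> z"
  shows "hilb A (symb_sq A (edge_ideal A E) :: 'k::field mpoly set)
      (ideal_prod A (edge_ideal A E) (edge_ideal A E)) z = card (quotient_basis (nat z))"
  unfolding symb_sq_edge_ideal edge_ideal_square quotient_basis_def
  using finite_vertices divisible_by_two_edges_imp_deg_ge2_on_covers assms
  by (rule hilb_monomial_ideal)

lemma multiple_of_edge_exps_iff:
  assumes "Poly_Mapping.keys m \<subseteq> B"
  shows "multiple_of (edge_exps B E) m \<longleftrightarrow> \<not> indep_set E (Poly_Mapping.keys m)"
proof
  assume "multiple_of (edge_exps B E) m"
  then obtain i j where "{i, j} \<in> E" "unit_exp i + unit_exp j adds m"
    by (auto simp: multiple_of_def edge_exps_def)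
  then show "\<not> indep_set E (Poly_Mapping.keys m)"
    using edge_distinct by (auto simp: indep_set_def unit_exp_add_unit_exp_adds_iff)
next
  assume "\<not> indep_set E (Poly_Mapping.keys m)"
  then obtain i j where "{i, j} \<in> E" "i \<in> Poly_Mapping.keys m" "j \<in> Poly_Mapping.keys m"
    by (auto simp: indep_set_def)
  then show "multiple_of (edge_exps B E) m"
    using assms edge_distinct unfolding multiple_of_def edge_exps_def
    by (fastforce simp: unit_exp_add_unit_exp_adds_iff)
qed

lemma hilb_triangle_quotient:
  "hilb (A - closed_nbhd E T) (polyring (A - closed_nbhd E T))
      (edge_ideal (A - closed_nbhd E T) E :: 'k::field mpoly set) (z - 3) =
    card (triangle_quotient_basis T (nat z))"
proof (cases "z < 3")
  case True
  then have "triangle_quotient_basis T (nat z) = {}"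
    by (auto simp: triangle_quotient_basis_def)
  with True show ?thesis
    by (simp add: hilb_def)
next
  case False
  let ?B = "A - closed_nbhd E T"
  have "hilb ?B (polyring ?B) (edge_ideal ?B E :: 'k mpoly set) (z - 3) =
      card {m. Poly_Mapping.keys m \<subseteq> ?B \<and> mdeg m = nat (z - 3) \<and> True \<and>
        \<not> multiple_of (edge_exps ?B E) m}"
    unfolding polyring_eq_monomial_ideal edge_ideal_eq_monomial_ideal
    by (rule hilb_monomial_ideal) (use finite_vertices False in auto)
  also have "\<dots> = card (triangle_quotient_basis T (nat z))"
    unfolding triangle_quotient_basis_def
    by (rule arg_cong[where f = card], rule Collect_cong)
      (use False multiple_of_edge_exps_iff in fastforce)
  finally show ?thesis .
qed

end

theorem corollary6p9:
  fixes n :: nat and E :: "nat set set" and z :: int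
  assumes "\<forall>e\<in>E. e \<subseteq> {1..n} \<and> card e = 2"
  shows "hilb {1..n} (symb_sq {1..n} (edge_ideal {1..n} E :: ('k::field) mpoly set))
            (ideal_prod {1..n} (edge_ideal {1..n} E) (edge_ideal {1..n} E)) z
       = (\<Sum>T\<in>triangles n E.
            hilb ({1..n} - closed_nbhd E T) (polyring ({1..n} - closed_nbhd E T))
                 (edge_ideal ({1..n} - closed_nbhd E T) E :: 'k mpoly set) (z - 3))"
proof -
  interpret simple_graph "{1..n}" E
    using assms by unfold_locales auto
  have triangles: "triangles n E = triangles_on {1..n} E"
    by (simp add: triangles_def triangles_on_def)
  show ?thesis
  proof (cases "z < 0")
    case True
    then show ?thesis by (simp add: hilb_def)
  next
    case False
    then show ?thesis
      unfolding triangles hilb_triangle_quotient card_quotient_basis[symmetric]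
      by (intro hilb_symb_sq_edge_ideal) simp
  qed
qed

end
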